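(* Let $\Omega$ be the closure of a bounded domain in $\mathbb{R}^d$, let $X$ be a Banach space of functions on $\Omega$ with $C(\Omega)\subset X$ and $\|g\|_X\le C_X\|g\|_{C(\Omega)}$ for all $g\in C(\Omega)$, let $K$ be a compact subset of $C(\Omega)$, let ${\bf x}=(x_1,\dots,x_m)\in\Omega^m$ and $w\in\mathbb{R}^m$. Then $$\lim_{\varepsilon\to0^+}R(K(w,\varepsilon))_X=R(K_w)_X .$$
   Context: $\lambda_{\bf x}(g):=(g(x_1),\dots,g(x_m))$ for $g\in C(\Omega)$; on $\mathbb{R}^m$, $\|v\|:=\big[\frac1m\sum_{j=1}^m|v_j|^2\big]^{1/2}$. $K_{w'}:=\{h\in K:\lambda_{\bf x}(h)=w'\}$, $K(w,\varepsilon):=\bigcup_{w'\in\mathbb{R}^m,\ \|w'-w\|\le\varepsilon}K_{w'}$. For $S\subset X$, $R(S)_X:=\inf\{r:\ S\subset B(z,r)_X\text{ for some }z\in X\}$ (Chebyshev radius in $X$). *)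

theory Defs
  imports "HOL-Analysis.Analysis"
begin

text \<open>C(Omega): continuous real functions on Omega (extensional to Omega), with the sup metric.\<close>
definition Cmetric :: "'a::topological_space set \<Rightarrow> ('a \<Rightarrow> real) metric" where
  "Cmetric \<Omega> = cfunspace (top_of_set \<Omega>) (euclidean_metric :: real metric)"

definition Cfun :: "'a::topological_space set \<Rightarrow> ('a \<Rightarrow> real) set" where
  "Cfun \<Omega> = mspace (Cmetric \<Omega>)"

definition supnorm :: "'a set \<Rightarrow> ('a \<Rightarrow> real) \<Rightarrow> real" where
  "supnorm \<Omega> g = (SUP x\<in>\<Omega>. \<bar>g x\<bar>)"

text \<open>lambda_x(g) = (g(x_1),...,g(x_m)), with the index set {1..m} rendered as a finite type 'm.\<close>
definition sample :: "('m::finite \<Rightarrow> 'd) \<Rightarrow> ('d \<Rightarrow> real) \<Rightarrow> real ^ 'm" where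
  "sample x g = (\<chi> j. g (x j))"

definition rms_norm :: "real ^ 'm::finite \<Rightarrow> real" where
  "rms_norm v = sqrt ((1 / real CARD('m)) * (\<Sum>j\<in>UNIV. \<bar>v $ j\<bar>^2))"

definition Kfib :: "('d \<Rightarrow> real) set \<Rightarrow> ('m::finite \<Rightarrow> 'd) \<Rightarrow> real ^ 'm \<Rightarrow> ('d \<Rightarrow> real) set" where
  "Kfib K x w' = {h \<in> K. sample x h = w'}"

definition Knbhd :: "('d \<Rightarrow> real) set \<Rightarrow> ('m::finite \<Rightarrow> 'd) \<Rightarrow> real ^ 'm \<Rightarrow> real \<Rightarrow> ('d \<Rightarrow> real) set" where
  "Knbhd K x w \<epsilon> = (\<Union>w'\<in>{w'. rms_norm (w' - w) \<le> \<epsilon>}. Kfib K x w')"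

definition cheb_radius :: "'b::real_normed_vector set \<Rightarrow> real" where
  "cheb_radius S = Inf {r. \<exists>z. S \<subseteq> ball z r}"

end

theory Submission
  imports Defs
begin

(* J and the sampling map are Lipschitz on C(Omega), so on the compact set K the sets K(w,eps)
   are the sublevel sets {phi <= eps} of the continuous function phi h = ||lambda_x(h) - w||,
   and K_w = {phi <= 0}. Monotonicity of the Chebyshev radius gives the lower bound. For the
   upper bound, cover J(K_w) by a ball B(z,c) with c slightly above its radius: the continuous
   function h |-> ||z - J h|| is below c on {phi <= 0}, and by compactness of K it stays below c
   on {phi <= eps} for all small eps. *)

lemma cheb_radius_bdd_below:
  fixes S :: "'b::real_normed_vector set"
  assumes "S \<noteq> {}"
  shows "bdd_below {r. \<exists>z. S \<subseteq> ball z r}"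
proof (rule bdd_belowI)
  fix r assume "r \<in> {r. \<exists>z. S \<subseteq> ball z r}"
  then obtain z where "S \<subseteq> ball z r" by blast
  moreover obtain s where "s \<in> S" using assms by blast
  ultimately have "dist z s < r" by auto
  then show "0 \<le> r" using zero_le_dist[of z s] by linarith
qed

lemma cheb_radius_le:
  fixes S :: "'b::real_normed_vector set"
  assumes "S \<noteq> {}" "S \<subseteq> ball z r"
  shows "cheb_radius S \<le> r"
  unfolding cheb_radius_def
  using assms by (intro cInf_lower cheb_radius_bdd_below) auto

lemma cheb_radius_mono:
  fixes S :: "'b::real_normed_vector set"
  assumes "S \<noteq> {}" "bounded T" "S \<subseteq> T"
  shows "cheb_radius S \<le> cheb_radius T"
proof -
  obtain B where "T \<subseteq> ball 0 B" using assms(2) bounded_subset_ballD by blast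
  then have "{r. \<exists>z. T \<subseteq> ball z r} \<noteq> {}" by blast
  moreover have "{r. \<exists>z. T \<subseteq> ball z r} \<subseteq> {r. \<exists>z. S \<subseteq> ball z r}"
    using assms(3) by blast
  ultimately show ?thesis
    unfolding cheb_radius_def by (rule cInf_superset_mono[OF _ cheb_radius_bdd_below[OF assms(1)]])
qed

lemma cheb_radius_less_imp_subset_ball:
  fixes S :: "'b::real_normed_vector set"
  assumes "bounded S" "cheb_radius S < r"
  obtains z where "S \<subseteq> ball z r"
proof -
  obtain B where "S \<subseteq> ball 0 B" using assms(1) bounded_subset_ballD by blast
  then have "{r. \<exists>z. S \<subseteq> ball z r} \<noteq> {}" by blast
  from cInf_lessD[OF this assms(2)[unfolded cheb_radius_def]] obtain r' z
    where "S \<subseteq> ball z r'" "r' < r" by blast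
  then show thesis using that subset_ball[of r' r z] by auto
qed

text \<open>\<open>\<phi>\<close> attains a positive minimum on the compact set \<open>{\<psi> \<ge> c}\<close>.\<close>

lemma compactin_eventually_sublevel_less:
  assumes K: "compactin X K"
    and \<phi>: "continuous_map (subtopology X K) euclideanreal \<phi>"
    and \<psi>: "continuous_map (subtopology X K) euclideanreal \<psi>"
    and zero: "\<And>h. h \<in> K \<Longrightarrow> \<phi> h \<le> 0 \<Longrightarrow> \<psi> h < c"
  shows "\<forall>\<^sub>F \<epsilon> in at_right 0. \<forall>h\<in>K. \<phi> h \<le> \<epsilon> \<longrightarrow> \<psi> h < c"
proof -
  have top: "topspace (subtopology X K) = K"
    using K compactin_subset_topspace by auto
  define K' where "K' = {h \<in> K. \<psi> h \<in> {c..}}"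
  have "K' = {h \<in> topspace (subtopology X K). \<psi> h \<in> {c..}}"
    using top by (simp add: K'_def)
  then have closed: "closedin (subtopology X K) K'"
    using closedin_continuous_map_preimage[OF \<psi>, of "{c..}"] by simp
  have "compactin (subtopology X K) K"
    using K compactin_subtopology by blast
  then have cK': "compactin (subtopology X K) K'"
    by (rule closed_compactin[OF _ _ closed]) (auto simp: K'_def)
  obtain e where e: "e > 0" "\<And>h. h \<in> K' \<Longrightarrow> e \<le> \<phi> h"
  proof (cases "K' = {}")
    case False
    have "compact (\<phi> ` K')" using image_compactin[OF cK' \<phi>] by simp
    then obtain m where m: "m \<in> K'" "\<And>h. h \<in> K' \<Longrightarrow> \<phi> m \<le> \<phi> h"
      using compact_attains_inf[of "\<phi> ` K'"] False by auto
    have "\<phi> m > 0" using m(1) zero by (force simp: K'_def)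
    then show thesis using that m(2) by blast
  qed (use that[of 1] in simp)
  have "\<forall>\<^sub>F \<epsilon> in at_right 0. \<epsilon> < e"
    using e(1) eventually_at_right_real[of 0 e] by (simp add: eventually_mono)
  then show ?thesis
  proof (rule eventually_mono, intro ballI impI)
    fix \<epsilon> h assume "\<epsilon> < e" "h \<in> K" "\<phi> h \<le> \<epsilon>"
    then show "\<psi> h < c" using e(2)[of h] by (force simp: K'_def)
  qed
qed

lemma tendsto_cheb_radius_sublevel:
  fixes F :: "'a \<Rightarrow> 'b::real_normed_vector"
  assumes K: "compactin X K"
    and F: "continuous_map (subtopology X K) euclidean F"
    and \<phi>: "continuous_map (subtopology X K) euclideanreal \<phi>"
  shows "((\<lambda>\<epsilon>. cheb_radius (F ` {h \<in> K. \<phi> h \<le> \<epsilon>}))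
           \<longlongrightarrow> cheb_radius (F ` {h \<in> K. \<phi> h \<le> 0})) (at_right 0)"
proof (cases "{h \<in> K. \<phi> h \<le> 0} = {}")
  case True
  then have "\<forall>\<^sub>F \<epsilon> in at_right 0. \<forall>h\<in>K. \<phi> h \<le> \<epsilon> \<longrightarrow> (0::real) < 0"
    by (intro compactin_eventually_sublevel_less[OF K \<phi>]) auto
  then have "\<forall>\<^sub>F \<epsilon> in at_right 0. {h \<in> K. \<phi> h \<le> \<epsilon>} = {h \<in> K. \<phi> h \<le> 0}"
    by eventually_elim (use True in auto)
  then show ?thesis
    by (rule tendsto_eventually[OF eventually_mono]) simp
next
  case False
  let ?S = "\<lambda>\<epsilon>. F ` {h \<in> K. \<phi> h \<le> \<epsilon>}"
  have "compactin (subtopology X K) K"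
    using K compactin_subtopology by blast
  then have "compact (F ` K)"
    using image_compactin[OF _ F] by simp
  then have bounded: "bounded (?S \<epsilon>)" for \<epsilon>
    by (rule bounded_subset[OF compact_imp_bounded]) auto
  have pos: "\<forall>\<^sub>F \<epsilon> in at_right 0. (0::real) < \<epsilon>"
    by (rule eventually_at_right_less)
  have mono: "?S 0 \<subseteq> ?S \<epsilon>" if "0 < \<epsilon>" for \<epsilon>
    using that by force
  show ?thesis
  proof (rule order_tendstoI)
    fix a assume a: "a < cheb_radius (?S 0)"
    from pos show "\<forall>\<^sub>F \<epsilon> in at_right 0. a < cheb_radius (?S \<epsilon>)"
    proof eventually_elim
      case (elim \<epsilon>)
      have "cheb_radius (?S 0) \<le> cheb_radius (?S \<epsilon>)"
        using False elim by (intro cheb_radius_mono bounded mono) auto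
      then show ?case using a by linarith
    qed
  next
    fix a assume a: "cheb_radius (?S 0) < a"
    define c where "c = (cheb_radius (?S 0) + a) / 2"
    have "cheb_radius (?S 0) < c"
      using a by (simp add: c_def)
    then obtain z where z: "?S 0 \<subseteq> ball z c"
      by (rule cheb_radius_less_imp_subset_ball[OF bounded])
    have "continuous_map (subtopology X K) euclideanreal (\<lambda>h. dist z (F h))"
      using continuous_map_compose[OF F, of euclideanreal "dist z"]
      by (simp add: o_def continuous_on_dist)
    then have "\<forall>\<^sub>F \<epsilon> in at_right 0. \<forall>h\<in>K. \<phi> h \<le> \<epsilon> \<longrightarrow> dist z (F h) < c"
      using z by (intro compactin_eventually_sublevel_less[OF K \<phi>]) auto
    with pos show "\<forall>\<^sub>F \<epsilon> in at_right 0. cheb_radius (?S \<epsilon>) < a"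
    proof eventually_elim
      case (elim \<epsilon>)
      then have "cheb_radius (?S \<epsilon>) \<le> c"
        using False mono by (intro cheb_radius_le[of _ z]) auto
      then show ?case using a by (simp add: c_def)
    qed
  qed
qed

lemma Lipschitz_bound_imp_continuous_map:
  fixes F :: "'a \<Rightarrow> 'c::metric_space"
  assumes "K \<subseteq> mspace M"
    and "\<And>f g. f \<in> K \<Longrightarrow> g \<in> K \<Longrightarrow> dist (F f) (F g) \<le> B * mdist M f g"
  shows "continuous_map (subtopology (mtopology_of M) K) euclidean F"
proof -
  have "Lipschitz_continuous_map (submetric M K) euclidean_metric F"
    unfolding Lipschitz_continuous_map_def using assms by auto
  from Lipschitz_continuous_imp_continuous_map[OF this] show ?thesis
    by (simp add: mtopology_of_submetric)
qed

lemma Cfun_iff: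
  "f \<in> Cfun \<Omega> \<longleftrightarrow> f \<in> extensional \<Omega> \<and> bounded (f ` \<Omega>) \<and> continuous_on \<Omega> f"
  by (simp add: Cfun_def Cmetric_def)

lemma Cfun_lincomb:
  assumes "f \<in> Cfun \<Omega>" "g \<in> Cfun \<Omega>"
  shows "(\<lambda>y\<in>\<Omega>. f y + c * g y) \<in> Cfun \<Omega>"
proof -
  have "bounded ((\<lambda>y. f y + c * g y) ` \<Omega>)"
    using assms bounded_scaleR_comp[of g \<Omega> c] by (intro bounded_plus_comp) (auto simp: Cfun_iff)
  moreover have "continuous_on \<Omega> (\<lambda>y. f y + c * g y)"
    using assms by (intro continuous_intros) (auto simp: Cfun_iff)
  ultimately show ?thesis
    by (auto simp: Cfun_iff cong: continuous_on_cong)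
qed

lemma abs_diff_le_mdist_Cmetric:
  assumes "f \<in> Cfun \<Omega>" "g \<in> Cfun \<Omega>" "y \<in> \<Omega>"
  shows "\<bar>f y - g y\<bar> \<le> mdist (Cmetric \<Omega>) f g"
  using assms mdist_cfunspace_imp_mdist_le[of f "top_of_set \<Omega>" euclidean_metric g]
  by (simp add: Cmetric_def Cfun_def dist_real_def)

lemma supnorm_diff_eq_mdist_Cmetric:
  assumes "f \<in> Cfun \<Omega>" "g \<in> Cfun \<Omega>" "\<Omega> \<noteq> {}"
  shows "supnorm \<Omega> (\<lambda>y\<in>\<Omega>. f y - g y) = mdist (Cmetric \<Omega>) f g"
  using assms
  by (simp add: supnorm_def Cmetric_def Cfun_def mdist_cfunspace_eq_mdist_funspace
      Met_TC.fdist_def Met_TC.fspace_def dist_real_def)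

lemma dist_le_mdist_Cmetric_if_linear_bounded:
  fixes J :: "('d::topological_space \<Rightarrow> real) \<Rightarrow> 'b::real_normed_vector"
  assumes "\<Omega> \<noteq> {}"
    and J_lin: "\<And>f g c. f \<in> Cfun \<Omega> \<Longrightarrow> g \<in> Cfun \<Omega> \<Longrightarrow>
                 J (\<lambda>y\<in>\<Omega>. f y + c * g y) = J f + c *\<^sub>R J g"
    and J_bound: "\<And>g. g \<in> Cfun \<Omega> \<Longrightarrow> norm (J g) \<le> CX * supnorm \<Omega> g"
    and f: "f \<in> Cfun \<Omega>" and g: "g \<in> Cfun \<Omega>"
  shows "dist (J f) (J g) \<le> \<bar>CX\<bar> * mdist (Cmetric \<Omega>) f g"
proof -
  let ?h = "\<lambda>y\<in>\<Omega>. f y - g y"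
  have h_eq: "?h = (\<lambda>y\<in>\<Omega>. f y + (-1) * g y)" by simp
  have "dist (J f) (J g) = norm (J ?h)"
    unfolding h_eq J_lin[OF f g] by (simp add: dist_norm)
  also have "\<dots> \<le> CX * mdist (Cmetric \<Omega>) f g"
    using J_bound[OF Cfun_lincomb[OF f g, of "-1"]]
    by (simp only: h_eq [symmetric] supnorm_diff_eq_mdist_Cmetric[OF f g assms(1)])
  also have "\<dots> \<le> \<bar>CX\<bar> * mdist (Cmetric \<Omega>) f g"
    by (simp add: mult_right_mono)
  finally show ?thesis .
qed

lemma norm_sample_diff_le_mdist_Cmetric:
  fixes x :: "'m::finite \<Rightarrow> 'd::topological_space"
  assumes "f \<in> Cfun \<Omega>" "g \<in> Cfun \<Omega>" "\<And>j. x j \<in> \<Omega>"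
  shows "norm (sample x f - sample x g) \<le> real CARD('m) * mdist (Cmetric \<Omega>) f g"
proof -
  have "norm (sample x f - sample x g) \<le> (\<Sum>j\<in>UNIV. \<bar>f (x j) - g (x j)\<bar>)"
    using norm_le_l1_cart[of "sample x f - sample x g"] by (simp add: sample_def)
  also have "\<dots> \<le> (\<Sum>j\<in>(UNIV::'m set). mdist (Cmetric \<Omega>) f g)"
    using assms by (intro sum_mono abs_diff_le_mdist_Cmetric)
  finally show ?thesis by simp
qed

lemma rms_norm_eq_norm: "rms_norm (v :: real ^ 'm::finite) = norm v / sqrt (real CARD('m))"
  by (simp add: rms_norm_def norm_vec_def L2_set_def real_sqrt_divide)

lemma Knbhd_eq_sublevel:
  "Knbhd K x w \<epsilon> = {h \<in> K. rms_norm (sample x h - w) \<le> \<epsilon>}"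
  by (auto simp: Knbhd_def Kfib_def)

lemma Kfib_eq_sublevel:
  "Kfib K x w = {h \<in> K. rms_norm (sample x h - w) \<le> 0}"
  by (auto simp: Kfib_def rms_norm_eq_norm divide_le_0_iff)

theorem lemma4p3:
  fixes D \<Omega> :: "'d::euclidean_space set"
    and J :: "('d \<Rightarrow> real) \<Rightarrow> 'b::banach"
    and CX :: real
    and K :: "('d \<Rightarrow> real) set"
    and x :: "'m::finite \<Rightarrow> 'd"
    and w :: "real ^ 'm"
  assumes "open D" and "connected D" and "bounded D" and "D \<noteq> {}"
    and "\<Omega> = closure D"
    and J_lin: "\<And>f g c. f \<in> Cfun \<Omega> \<Longrightarrow> g \<in> Cfun \<Omega> \<Longrightarrow>
                 J (restrict (\<lambda>y. f y + c * g y) \<Omega>) = J f + c *\<^sub>R J g"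
    and J_inj: "inj_on J (Cfun \<Omega>)"
    and J_bound: "\<And>g. g \<in> Cfun \<Omega> \<Longrightarrow> norm (J g) \<le> CX * supnorm \<Omega> g"
    and "K \<subseteq> Cfun \<Omega>"
    and "compactin (mtopology_of (Cmetric \<Omega>)) K"
    and "\<And>j. x j \<in> \<Omega>"
  shows "((\<lambda>\<epsilon>. cheb_radius (J ` Knbhd K x w \<epsilon>)) \<longlongrightarrow> cheb_radius (J ` Kfib K x w))
           (at_right 0)"
proof -
  let ?M = "Cmetric \<Omega>"
  have \<Omega>_ne: "\<Omega> \<noteq> {}"
    using assms(4,5) closure_subset by blast
  have K_sub: "K \<subseteq> mspace ?M"
    using assms(9) by (simp add: Cfun_def)
  have "dist (J f) (J g) \<le> \<bar>CX\<bar> * mdist ?M f g" if "f \<in> K" "g \<in> K" for f g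
    using that assms(9) by (intro dist_le_mdist_Cmetric_if_linear_bounded[OF \<Omega>_ne J_lin J_bound]) auto
  then have J_cont: "continuous_map (subtopology (mtopology_of ?M) K) euclidean J"
    by (rule Lipschitz_bound_imp_continuous_map[OF K_sub])
  have "dist (sample x f) (sample x g) \<le> real CARD('m) * mdist ?M f g" if "f \<in> K" "g \<in> K" for f g
    using that assms(9,11) unfolding dist_norm by (intro norm_sample_diff_le_mdist_Cmetric) auto
  then have "continuous_map (subtopology (mtopology_of ?M) K) euclidean (sample x)"
    by (rule Lipschitz_bound_imp_continuous_map[OF K_sub])
  moreover have "continuous_map euclidean euclideanreal (\<lambda>v. rms_norm (v - w))"
    by (simp add: rms_norm_eq_norm continuous_intros)
  ultimately have "continuous_map (subtopology (mtopology_of ?M) K) euclideanreal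
      (\<lambda>h. rms_norm (sample x h - w))"
    by (rule continuous_map_compose[unfolded o_def])
  then show ?thesis
    unfolding Knbhd_eq_sublevel Kfib_eq_sublevel
    by (rule tendsto_cheb_radius_sublevel[OF assms(10) J_cont])
qed

end
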